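(* The elements $\{xC_ny\}_{n\in\mathbb N}$ (free products) mutually commute with respect to the $q$-shuffle product $\star$.
   Context: $\mathbb F$ is a field of characteristic zero and $q\in\mathbb F$ is nonzero and not a root of unity; $[n]_q=(q^n-q^{-n})/(q-q^{-1})$. $\mathbb V$ is the free algebra on noncommuting letters $x,y$; a word is a product of letters (the empty word is $1$), and words form a basis. The $q$-shuffle product $\star$ on $\mathbb V$ is the bilinear product with $1\star v=v\star 1=v$ and, for nontrivial words $u=u_1\cdots u_r$, $v=v_1\cdots v_s$ (letters $u_i,v_j$), $u\star v=u_1\bigl((u_2\cdots u_r)\star v\bigr)+v_1\bigl(u\star(v_2\cdots v_s)\bigr)q^{(u_1,v_1)+(u_2,v_1)+\cdots+(u_r,v_1)}$, where juxtaposition is concatenation and $(x,x)=(y,y)=2$, $(x,y)=(y,x)=-2$. Set $\overline x=1$, $\overline y=-1$. A word $u_1\cdots u_n$ is Catalan if $\overline u_1+\cdots+\overline u_i\ge0$ for $1\le i\le n-1$ and $=0$ for $i=n$. For $n\in\mathbb N$, $C_n=\sum u_1u_2\cdots u_{2n}\,[1]_q[1+\overline u_1]_q[1+\overline u_1+\overline u_2]_q\cdots[1+\overline u_1+\cdots+\overline u_{2n}]_q$, summed over all Catalan words of length $2n$ (so $C_0=1$). *)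

theory Defs
  imports Main
begin

text \<open>An element of the free algebra V
over a field 'a is represented by its coefficient function (word to 'a); all elements
considered below are finitely supported.\<close>

datatype letter = X | Y

type_synonym word = "letter list"

definition qint :: "'a::field \<Rightarrow> int \<Rightarrow> 'a" where
  "qint q n = (q powi n - q powi (- n)) / (q - inverse q)"

fun lpair :: "letter \<Rightarrow> letter \<Rightarrow> int" where
  "lpair X X = 2" | "lpair Y Y = 2" | "lpair X Y = -2" | "lpair Y X = -2"

fun lbar :: "letter \<Rightarrow> int" where
  "lbar X = 1" | "lbar Y = -1"

definition barsum :: "word \<Rightarrow> int" where
  "barsum w = (\<Sum>c\<leftarrow>w. lbar c)"

definition lprefix :: "letter \<Rightarrow> (word \<Rightarrow> 'a::zero) \<Rightarrow> word \<Rightarrow> 'a" where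
  "lprefix a f w = (case w of [] \<Rightarrow> 0 | b # w' \<Rightarrow> (if b = a then f w' else 0))"

definition basis :: "word \<Rightarrow> word \<Rightarrow> 'a::{zero,one}" where
  "basis v w = (if w = v then 1 else 0)"

fun qsh :: "'a::field \<Rightarrow> word \<Rightarrow> word \<Rightarrow> word \<Rightarrow> 'a" where
  "qsh q [] v = basis v"
| "qsh q (a # u) [] = basis (a # u)"
| "qsh q (a # u) (b # v) =
     (\<lambda>w. lprefix a (qsh q u (b # v)) w
          + q powi (\<Sum>c\<leftarrow>a # u. lpair c b) * lprefix b (qsh q (a # u) v) w)"

definition qshuffle :: "'a::field \<Rightarrow> (word \<Rightarrow> 'a) \<Rightarrow> (word \<Rightarrow> 'a) \<Rightarrow> word \<Rightarrow> 'a" where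
  "qshuffle q f g w = (\<Sum>u\<in>{u. f u \<noteq> 0}. \<Sum>v\<in>{v. g v \<noteq> 0}. f u * g v * qsh q u v w)"

definition catalan :: "word \<Rightarrow> bool" where
  "catalan w \<longleftrightarrow> (\<forall>i. 1 \<le> i \<and> i < length w \<longrightarrow> barsum (take i w) \<ge> 0) \<and> barsum w = 0"

definition Cn :: "'a::field \<Rightarrow> nat \<Rightarrow> word \<Rightarrow> 'a" where
  "Cn q n w = (if catalan w \<and> length w = 2 * n
      then (\<Prod>i\<in>{0..2*n}. qint q (1 + barsum (take i w))) else 0)"

definition xCy :: "'a::field \<Rightarrow> nat \<Rightarrow> word \<Rightarrow> 'a" where
  "xCy q n w = (if 2 \<le> length w \<and> hd w = X \<and> last w = Y then Cn q n (butlast (tl w)) else 0)"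

end

theory Submission
  imports Defs
begin

text \<open>In the algebra of formal series in \<open>x, y\<close> let \<open>G = \<Sum>\<^sub>k (xy)\<^sup>k\<close> and \<open>A(r) = \<Sum>\<^sub>n r\<^sup>n\<^sup>+\<^sup>1 xC\<^sub>ny\<close>.
  Both are described letter by letter (\<open>A(r)\<close> through weighted lattice walks), and comparing
  first letters gives \<open>G \<star> A(-q\<^sup>-\<^sup>1) - A(-q) \<star> G = (q - q\<^sup>-\<^sup>1) \<Sum>\<^sub>k k (xy)\<^sup>k\<close>.  In degree
  \<open>2n + 2\<close> this reads
  \<open>((-q\<^sup>-\<^sup>1)\<^sup>n\<^sup>+\<^sup>1 - (-q)\<^sup>n\<^sup>+\<^sup>1) xC\<^sub>ny = (q - q\<^sup>-\<^sup>1)(n + 1)(xy)\<^sup>n\<^sup>+\<^sup>1 - (products of some (xy)\<^sup>i with xC\<^sub>jy, j < n)\<close>.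
  As \<open>q\<close> is not a root of unity, induction puts every \<open>xC\<^sub>ny\<close> into the subalgebra generated by
  the \<open>(xy)\<^sup>k\<close>, which is commutative because the \<open>(xy)\<^sup>k\<close> commute with each other.\<close>

definition wpair :: "word \<Rightarrow> letter \<Rightarrow> int" where
  "wpair u c = (\<Sum>d\<leftarrow>u. lpair d c)"

lemma wpair_simps [simp]: "wpair [] c = 0" "wpair (d # u) c = lpair d c + wpair u c"
  by (simp_all add: wpair_def)

text \<open>The q-shuffle product of arbitrary coefficient functions (formal series), computed from
  the first letter \<open>c\<close> of the result: \<open>c\<close> comes either from the first factor, or from the second
  one after passing the remaining word \<open>u\<close> of the first, which costs \<open>q powi wpair u c\<close>.\<close>
fun qstar :: "'a::field \<Rightarrow> (word \<Rightarrow> 'a) \<Rightarrow> (word \<Rightarrow> 'a) \<Rightarrow> word \<Rightarrow> 'a" where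
  "qstar q F G [] = F [] * G []"
| "qstar q F G (c # w) = qstar q (\<lambda>u. F (c # u)) G w
      + qstar q (\<lambda>u. q powi wpair u c * F u) (\<lambda>u. G (c # u)) w"

lemma qstar_zero_left [simp]: "qstar q (\<lambda>u. 0) G w = 0"
  by (induction w arbitrary: G) simp_all

lemma qstar_zero_right [simp]: "qstar q F (\<lambda>u. 0) w = 0"
  by (induction w arbitrary: F) simp_all

lemma qstar_add_left: "qstar q (\<lambda>u. F1 u + F2 u) G w = qstar q F1 G w + qstar q F2 G w"
  by (induction w arbitrary: F1 F2 G) (simp_all add: distrib_left distrib_right)

lemma qstar_add_right: "qstar q F (\<lambda>u. G1 u + G2 u) w = qstar q F G1 w + qstar q F G2 w"
  by (induction w arbitrary: F G1 G2) (simp_all add: distrib_left distrib_right)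

lemma qstar_scale_left: "qstar q (\<lambda>u. a * F u) G w = a * qstar q F G w"
  by (induction w arbitrary: F G) (simp_all add: distrib_left mult.left_commute)

lemma qstar_scale_right: "qstar q F (\<lambda>u. a * G u) w = a * qstar q F G w"
  by (induction w arbitrary: F G) (simp_all add: distrib_left mult.left_commute)

lemma qstar_minus_left: "qstar q (\<lambda>u. - F u) G w = - qstar q F G w"
  using qstar_scale_left[of q "-1" F G w] by simp

lemma qstar_minus_right: "qstar q F (\<lambda>u. - G u) w = - qstar q F G w"
  using qstar_scale_right[of q F "-1" G w] by simp

lemma qstar_sum_left:
  "finite S \<Longrightarrow> qstar q (\<lambda>u. \<Sum>i\<in>S. F i u) G w = (\<Sum>i\<in>S. qstar q (F i) G w)"
  by (induction S rule: finite_induct) (simp_all add: qstar_add_left)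

lemma qstar_sum_right:
  "finite S \<Longrightarrow> qstar q F (\<lambda>u. \<Sum>i\<in>S. G i u) w = (\<Sum>i\<in>S. qstar q F (G i) w)"
  by (induction S rule: finite_induct) (simp_all add: qstar_add_right)

lemmas qstar_scalar_simps =
  qstar_scale_left qstar_scale_right qstar_minus_left qstar_minus_right

lemma basis_simps [simp]:
  "basis v [] = (if v = [] then 1 else 0)"
  "basis v (c # u) = (case v of [] \<Rightarrow> 0 | d # v' \<Rightarrow> (if d = c then basis v' u else 0))"
  by (auto simp: basis_def split: list.split)

lemma qstar_one_left [simp]: "qstar q (basis []) F w = F w"
proof (induction w arbitrary: F)
  case (Cons c w)
  have "(\<lambda>u. q powi wpair u c * basis [] u) = basis []"
    by (simp add: basis_def fun_eq_iff)
  with Cons show ?case by simp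
qed simp

lemma qstar_one_right [simp]: "qstar q F (basis []) w = F w"
  by (induction w arbitrary: F) simp_all

text \<open>The pairing is additive, so twisting by \<open>q powi wpair u c\<close> is multiplicative for
  \<open>qstar\<close>; this is what makes \<open>qstar\<close> associative.\<close>
lemma twist_qstar:
  assumes "q \<noteq> 0"
  shows "q powi wpair u c * qstar q F G u
    = qstar q (\<lambda>v. q powi wpair v c * F v) (\<lambda>v. q powi wpair v c * G v) u"
proof (induction u arbitrary: F G)
  case (Cons d u)
  have shift: "(\<lambda>v. q powi wpair (d # v) c * H (d # v))
      = (\<lambda>v. q powi lpair d c * (q powi wpair v c * H (d # v)))" for H :: "word \<Rightarrow> 'a"
    using assms by (simp add: power_int_add fun_eq_iff)
  have swap: "(\<lambda>v. q powi wpair v d * (q powi wpair v c * F v))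
      = (\<lambda>v. q powi wpair v c * (q powi wpair v d * F v))"
    by (simp add: mult.left_commute)
  have "q powi wpair (d # u) c * qstar q F G (d # u)
     = q powi lpair d c * (q powi wpair u c * qstar q (\<lambda>v. F (d # v)) G u)
       + q powi lpair d c * (q powi wpair u c * qstar q (\<lambda>v. q powi wpair v d * F v) (\<lambda>v. G (d # v)) u)"
    using assms by (simp add: power_int_add algebra_simps)
  also have "\<dots> = qstar q (\<lambda>v. q powi wpair v c * F v) (\<lambda>v. q powi wpair v c * G v) (d # u)"
    by (simp only: Cons.IH qstar.simps shift swap qstar_scale_left qstar_scale_right)
  finally show ?case .
qed simp

lemma qstar_assoc:
  assumes "q \<noteq> 0"
  shows "qstar q (qstar q F G) H w = qstar q F (qstar q G H) w"
proof (induction w arbitrary: F G H)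
  case (Cons c w)
  have "(\<lambda>u. q powi wpair u c * qstar q F G u)
     = qstar q (\<lambda>v. q powi wpair v c * F v) (\<lambda>v. q powi wpair v c * G v)"
    using assms by (simp add: twist_qstar fun_eq_iff)
  then show ?case
    by (simp add: Cons.IH qstar_add_left qstar_add_right)
qed simp

lemma qsh_eq_qstar: "qsh q u v w = qstar q (basis u) (basis v) w"
proof (induction w arbitrary: u v)
  case Nil
  then show ?case
    by (cases u; cases v) (simp_all add: lprefix_def)
next
  case (Cons c w)
  have drop: "(\<lambda>x. basis (a # u) (c # x)) = (if a = c then basis u else (\<lambda>_. 0))" for a u
    by (simp add: fun_eq_iff)
  have twist: "(\<lambda>x. q powi wpair x c * basis u x) = (\<lambda>x. q powi wpair u c * basis u x)" for u
    by (simp add: basis_def fun_eq_iff)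
  show ?case
  proof (cases u; cases v)
    fix a u' b v'
    assume "u = a # u'" "v = b # v'"
    moreover have "(\<Sum>d\<leftarrow>a # u'. lpair d b) = wpair (a # u') b"
      by (simp add: wpair_def)
    ultimately show ?thesis
      by (simp only: qsh.simps qstar.simps drop twist)
        (auto simp: lprefix_def Cons.IH qstar_scale_left)
  qed (simp_all del: qstar.simps)
qed

lemma basis_expansion:
  fixes f :: "word \<Rightarrow> 'a::comm_ring_1"
  assumes "finite {u. f u \<noteq> 0}"
  shows "(\<lambda>w. \<Sum>u | f u \<noteq> 0. f u * basis u w) = f"
proof
  fix w
  have "(\<Sum>u | f u \<noteq> 0. f u * basis u w) = (\<Sum>u | f u \<noteq> 0. if u = w then f u else 0)"
    by (rule sum.cong) (auto simp: basis_def)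
  also have "\<dots> = f w"
    using assms by (simp add: sum.delta')
  finally show "(\<Sum>u | f u \<noteq> 0. f u * basis u w) = f w" .
qed

lemma qshuffle_eq_qstar:
  assumes "finite {u. f u \<noteq> 0}" "finite {v. g v \<noteq> 0}"
  shows "qshuffle q f g = qstar q f g"
proof
  fix w
  have "qshuffle q f g w
      = (\<Sum>u | f u \<noteq> 0. f u * qstar q (basis u) (\<lambda>x. \<Sum>v | g v \<noteq> 0. g v * basis v x) w)"
    unfolding qshuffle_def qsh_eq_qstar
    using assms(2) by (simp add: qstar_sum_right qstar_scale_right sum_distrib_left mult.assoc)
  also have "\<dots> = qstar q (\<lambda>x. \<Sum>u | f u \<noteq> 0. f u * basis u x)
                           (\<lambda>x. \<Sum>v | g v \<noteq> 0. g v * basis v x) w"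
    using assms(1) by (simp add: qstar_sum_left qstar_scale_left)
  finally show "qshuffle q f g w = qstar q f g w"
    using assms by (simp only: basis_expansion)
qed

definition qnat :: "'a::field \<Rightarrow> nat \<Rightarrow> 'a" where
  "qnat q n = (q ^ n - inverse q ^ n) / (q - inverse q)"

lemma qint_of_nat: "qint q (int n) = qnat q n"
  by (simp add: qint_def qnat_def power_int_minus power_inverse)

lemma qnat_1: "q - inverse q \<noteq> 0 \<Longrightarrow> qnat q (Suc 0) = 1"
  by (simp add: qnat_def)

lemma qnat_Suc_left:
  assumes "q - inverse q \<noteq> 0"
  shows "qnat q (Suc n) = inverse q ^ n + q * qnat q n"
proof -
  have "q ^ Suc n - inverse q ^ Suc n = (q - inverse q) * inverse q ^ n + q * (q ^ n - inverse q ^ n)"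
    by (simp add: algebra_simps)
  then show ?thesis
    using assms by (simp add: qnat_def field_simps)
qed

lemma qnat_Suc_right:
  assumes "q - inverse q \<noteq> 0"
  shows "qnat q (Suc n) = q ^ n + inverse q * qnat q n"
proof -
  have "q ^ Suc n - inverse q ^ Suc n = (q - inverse q) * q ^ n + inverse q * (q ^ n - inverse q ^ n)"
    by (simp add: algebra_simps)
  then show ?thesis
    using assms by (simp add: qnat_def add_divide_distrib)
qed

lemma qnat_2: "q - inverse q \<noteq> 0 \<Longrightarrow> qnat q 2 = q + inverse q"
  using qnat_Suc_left[of q "Suc 0"] qnat_1[of q] by (simp add: numeral_2_eq_2)

lemma inverse_power_mult_power: "(q::'a::field) \<noteq> 0 \<Longrightarrow> inverse q ^ n * q ^ n = 1"
  by (simp add: power_mult_distrib[symmetric])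

lemma barsum_simps [simp]: "barsum [] = 0" "barsum (d # u) = lbar d + barsum u"
  by (simp_all add: barsum_def)

lemma wpair_eq_barsum: "wpair u c = 2 * lbar c * barsum u"
proof -
  have "lpair d c = 2 * lbar d * lbar c" for d
    by (cases d; cases c) simp_all
  then show ?thesis
    by (induction u) (simp_all add: algebra_simps)
qed

text \<open>\<open>walks q r k\<close> is the generating series of the walks (\<open>X\<close> up, \<open>Y\<close> down) from level \<open>k\<close>
  that first reach level 0 at their end; a step arriving at a level \<open>l \<ge> 1\<close> weighs \<open>[l]\<^sub>q\<close>, times
  \<open>r\<close> if it goes up.\<close>
fun walks :: "'a::field \<Rightarrow> 'a \<Rightarrow> nat \<Rightarrow> word \<Rightarrow> 'a" where
  "walks q r 0 [] = 1"
| "walks q r 0 (c # u) = 0"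
| "walks q r (Suc h) [] = 0"
| "walks q r (Suc h) (X # u) = r * qnat q (Suc (Suc h)) * walks q r (Suc (Suc h)) u"
| "walks q r (Suc h) (Y # u) = (if h = 0 then walks q r 0 u else qnat q h * walks q r h u)"

lemma walks_0: "walks q r 0 = basis []"
proof
  fix u show "walks q r 0 u = basis [] u"
    by (cases u) simp_all
qed

lemma barsum_walks: "walks q r h u \<noteq> 0 \<Longrightarrow> barsum u = - int h"
  by (induction q r h u rule: walks.induct) (auto split: if_splits)

lemma twist_walks_X [simp]:
  "(q::'a::field) powi wpair u X * walks q r h u = inverse q ^ (2 * h) * walks q r h u"
proof (cases "walks q r h u = 0")
  case False
  then have "wpair u X = - int (2 * h)"
    by (simp add: wpair_eq_barsum barsum_walks)
  then show ?thesis
    by (simp only: power_int_minus power_int_of_nat power_inverse)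
qed simp

lemma twist_walks_Y [simp]:
  "(q::'a::field) powi wpair u Y * walks q r h u = q ^ (2 * h) * walks q r h u"
proof (cases "walks q r h u = 0")
  case False
  then have "wpair u Y = int (2 * h)"
    by (simp add: wpair_eq_barsum barsum_walks)
  then show ?thesis
    by (simp only: power_int_of_nat)
qed simp

text \<open>\<open>catalan_series q r = \<Sum>\<^sub>n r\<^sup>n\<^sup>+\<^sup>1 xC\<^sub>ny\<close>, see \<open>catalan_series_eq_xCy\<close> below.\<close>
definition catalan_series :: "'a::field \<Rightarrow> 'a \<Rightarrow> word \<Rightarrow> 'a" where
  "catalan_series q r u = (case u of X # u' \<Rightarrow> r * walks q r 1 u' | _ \<Rightarrow> 0)"

lemma catalan_series_simps [simp]:
  "catalan_series q r [] = 0"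
  "catalan_series q r (X # u) = r * walks q r (Suc 0) u"
  "catalan_series q r (Y # u) = 0"
  by (simp_all add: catalan_series_def)

lemma twist_catalan_series [simp]:
  "(q::'a::field) powi wpair u c * catalan_series q r u = catalan_series q r u"
proof (cases "catalan_series q r u = 0")
  case False
  then obtain u' where u: "u = X # u'" and "walks q r 1 u' \<noteq> 0"
    by (auto simp: catalan_series_def split: list.splits letter.splits)
  then have "barsum u' = -1"
    using barsum_walks by fastforce
  then show ?thesis
    using u by (simp add: wpair_eq_barsum)
qed simp

fun alternating :: "word \<Rightarrow> bool" where
  "alternating [] = True"
| "alternating (X # Y # w) = alternating w"
| "alternating _ = False"

definition alt_series :: "word \<Rightarrow> 'a::field" where
  "alt_series u = (if alternating u then 1 else 0)"

definition y_alt_series :: "word \<Rightarrow> 'a::field" where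
  "y_alt_series u = (case u of Y # w \<Rightarrow> alt_series w | _ \<Rightarrow> 0)"

lemma alt_series_simps [simp]:
  "alt_series [] = 1" "alt_series (X # u) = y_alt_series u" "alt_series (Y # u) = 0"
  by (simp_all add: alt_series_def y_alt_series_def split: list.split letter.split)

lemma y_alt_series_simps [simp]:
  "y_alt_series [] = 0" "y_alt_series (X # u) = 0" "y_alt_series (Y # u) = alt_series u"
  by (simp_all add: y_alt_series_def)

lemma barsum_alternating: "alternating u \<Longrightarrow> barsum u = 0"
  by (induction u rule: alternating.induct) auto

lemma twist_alt_series [simp]: "(q::'a::field) powi wpair u c * alt_series u = alt_series u"
  by (simp add: alt_series_def wpair_eq_barsum barsum_alternating)

lemma barsum_y_alt_series: "y_alt_series u \<noteq> 0 \<Longrightarrow> barsum u = -1"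
  by (auto simp: y_alt_series_def alt_series_def barsum_alternating split: list.splits letter.splits if_splits)

lemma twist_y_alt_series_X [simp]:
  "(q::'a::field) powi wpair u X * y_alt_series u = inverse q ^ 2 * y_alt_series u"
proof (cases "(y_alt_series u :: 'a) = 0")
  case False
  then show ?thesis
    by (simp add: wpair_eq_barsum barsum_y_alt_series power_int_minus power_inverse)
qed simp

lemma twist_y_alt_series_Y [simp]:
  "(q::'a::field) powi wpair u Y * y_alt_series u = q ^ 2 * y_alt_series u"
proof (cases "(y_alt_series u :: 'a) = 0")
  case False
  then show ?thesis
    by (simp add: wpair_eq_barsum barsum_y_alt_series)
qed simp

text \<open>Up to scalars, the coefficients of \<open>X # X # w\<close> in \<open>catalan_series q (-q) \<star> alt_series\<close> and in
  \<open>alt_series \<star> catalan_series q (-1/q)\<close> are \<open>Phi q 0 w\<close> and \<open>Phi' q 0 w\<close>; \<open>h\<close> tracks the level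
  reached by the walk.\<close>
definition Phi :: "'a::field \<Rightarrow> nat \<Rightarrow> word \<Rightarrow> 'a" where
  "Phi q h w = qstar q (walks q (-q) (Suc (Suc h))) alt_series w
      - inverse q ^ Suc (Suc h) * qstar q (walks q (-q) (Suc h)) y_alt_series w"

definition Phi' :: "'a::field \<Rightarrow> nat \<Rightarrow> word \<Rightarrow> 'a" where
  "Phi' q h w = qstar q alt_series (walks q (-inverse q) (Suc (Suc h))) w
      - inverse q ^ h * qstar q y_alt_series (walks q (-inverse q) (Suc h)) w"

lemma Phi_Nil: "Phi q h [] = 0"
  by (simp add: Phi_def)

lemma Phi'_Nil: "Phi' q h [] = 0"
  by (simp add: Phi'_def)

lemma Phi_X:
  assumes "q \<noteq> 0" "q - inverse q \<noteq> 0"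
  shows "Phi q h (X # w) = - q * qnat q (Suc (Suc (Suc h))) * Phi q (Suc h) w"
proof -
  define T1 where "T1 = qstar q (walks q (-q) (Suc (Suc (Suc h)))) alt_series w"
  define T2 where "T2 = qstar q (walks q (-q) (Suc (Suc h))) y_alt_series w"
  have "Phi q h (X # w) = - q * qnat q (Suc (Suc (Suc h))) * T1
      + (inverse q ^ (2 * Suc (Suc h)) + inverse q ^ Suc (Suc h) * (q * qnat q (Suc (Suc h)))) * T2"
    by (simp add: Phi_def T1_def T2_def qstar_scalar_simps; simp add: algebra_simps)
  also have "inverse q ^ (2 * Suc (Suc h)) + inverse q ^ Suc (Suc h) * (q * qnat q (Suc (Suc h)))
      = q * qnat q (Suc (Suc (Suc h))) * inverse q ^ Suc (Suc (Suc h))"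
    using assms by (simp add: qnat_Suc_left field_simps mult_2 mult_2_right power_add)
  finally show ?thesis
    by (simp add: Phi_def T1_def T2_def algebra_simps)
qed

lemma Phi_Y_Suc:
  assumes "q \<noteq> 0" "q - inverse q \<noteq> 0"
  shows "Phi q (Suc h) (Y # w) = inverse q * qnat q (Suc h) * Phi q h w"
proof -
  define T1 where "T1 = qstar q (walks q (-q) (Suc (Suc h))) alt_series w"
  define T2 where "T2 = qstar q (walks q (-q) (Suc h)) y_alt_series w"
  have "Phi q (Suc h) (Y # w)
      = (qnat q (Suc (Suc h)) - inverse q ^ Suc (Suc (Suc h)) * q ^ (2 * Suc (Suc h))) * T1
        - inverse q ^ Suc (Suc (Suc h)) * qnat q (Suc h) * T2"
    by (simp add: Phi_def T1_def T2_def qstar_scalar_simps; simp add: algebra_simps)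
  also have "qnat q (Suc (Suc h)) - inverse q ^ Suc (Suc (Suc h)) * q ^ (2 * Suc (Suc h))
      = inverse q * qnat q (Suc h)"
    using assms by (simp add: qnat_Suc_right field_simps mult_2 mult_2_right power_add power2_eq_square)
  finally show ?thesis
    by (simp add: Phi_def T1_def T2_def algebra_simps)
qed

lemma Phi_Y_0:
  assumes "q \<noteq> 0" "q - inverse q \<noteq> 0"
  shows "Phi q 0 (Y # w) = - (inverse q ^ 2 * y_alt_series w)"
  using assms by (simp add: Phi_def qstar_scalar_simps walks_0 qnat_1 power2_eq_square field_simps)

lemma Phi'_X:
  assumes "q \<noteq> 0" "q - inverse q \<noteq> 0"
  shows "Phi' q h (X # w) = - inverse q * qnat q (Suc (Suc (Suc h))) * Phi' q (Suc h) w"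
proof -
  define T1 where "T1 = qstar q alt_series (walks q (-inverse q) (Suc (Suc (Suc h)))) w"
  define T2 where "T2 = qstar q y_alt_series (walks q (-inverse q) (Suc (Suc h))) w"
  have "Phi' q h (X # w) = - inverse q * qnat q (Suc (Suc (Suc h))) * T1
      + (1 + inverse q ^ h * inverse q ^ 2 * (inverse q * qnat q (Suc (Suc h)))) * T2"
    by (simp add: Phi'_def T1_def T2_def qstar_scalar_simps; simp add: algebra_simps)
  also have "1 + inverse q ^ h * inverse q ^ 2 * (inverse q * qnat q (Suc (Suc h)))
      = inverse q ^ Suc (Suc h) * (q ^ Suc (Suc h) + inverse q * qnat q (Suc (Suc h)))"
    using inverse_power_mult_power[OF assms(1), of "Suc (Suc h)"]
    by (simp add: algebra_simps power2_eq_square)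
  also have "\<dots> = inverse q * qnat q (Suc (Suc (Suc h))) * inverse q ^ Suc h"
    by (simp add: qnat_Suc_right[OF assms(2)] algebra_simps)
  finally show ?thesis
    by (simp add: Phi'_def T1_def T2_def algebra_simps)
qed

lemma Phi'_Y_Suc:
  assumes "q \<noteq> 0" "q - inverse q \<noteq> 0"
  shows "Phi' q (Suc h) (Y # w) = q * qnat q (Suc h) * Phi' q h w"
proof -
  define T1 where "T1 = qstar q alt_series (walks q (-inverse q) (Suc (Suc h))) w"
  define T2 where "T2 = qstar q y_alt_series (walks q (-inverse q) (Suc h)) w"
  have "Phi' q (Suc h) (Y # w) = (qnat q (Suc (Suc h)) - inverse q ^ Suc h) * T1
      - inverse q ^ Suc h * q ^ 2 * qnat q (Suc h) * T2"
    by (simp add: Phi'_def T1_def T2_def qstar_scalar_simps; simp add: algebra_simps)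
  also have "qnat q (Suc (Suc h)) - inverse q ^ Suc h = q * qnat q (Suc h)"
    using assms by (simp add: qnat_Suc_left)
  also have "inverse q ^ Suc h * q ^ 2 = q * inverse q ^ h"
    using assms by (simp add: power2_eq_square)
  finally show ?thesis
    by (simp add: Phi'_def T1_def T2_def algebra_simps)
qed

lemma Phi'_Y_0:
  assumes "q - inverse q \<noteq> 0"
  shows "Phi' q 0 (Y # w) = - (q ^ 2 * y_alt_series w)"
  using assms by (simp add: Phi'_def qstar_scalar_simps walks_0 qnat_1)

lemma Phi'_eq_Phi:
  assumes "q \<noteq> 0" "q - inverse q \<noteq> 0"
  shows "Phi' q h w = q ^ (2 * h + 4) * Phi q h w"
proof (induction w arbitrary: h)
  case Nil
  then show ?case by (simp add: Phi_Nil Phi'_Nil)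
next
  case (Cons c w)
  show ?case
  proof (cases c)
    case X
    then show ?thesis
      using assms by (simp add: Phi_X Phi'_X Cons.IH field_simps power_add eval_nat_numeral)
  next
    case Y
    then show ?thesis
      using assms
      by (cases h) (simp_all add: Phi_Y_0 Phi'_Y_0 Phi_Y_Suc Phi'_Y_Suc Cons.IH field_simps power_add eval_nat_numeral)
  qed
qed

lemma catalan_star_alt_XY:
  "qstar q (catalan_series q (-q)) alt_series (X # Y # w)
    = - q * alt_series w + qstar q (catalan_series q (-q)) alt_series w"
  by (simp add: qstar_scalar_simps walks_0)

lemma alt_star_catalan_XY:
  "qstar q alt_series (catalan_series q (-inverse q)) (X # Y # w)
    = - inverse q * alt_series w + qstar q alt_series (catalan_series q (-inverse q)) w"
  by (simp add: qstar_scalar_simps walks_0)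

lemma catalan_star_alt_XX:
  assumes "q \<noteq> 0" "q - inverse q \<noteq> 0"
  shows "qstar q (catalan_series q (-q)) alt_series (X # X # w) = q ^ 2 * qnat q 2 * Phi q 0 w"
  using assms qnat_2[OF assms(2)]
  by (simp add: Phi_def qstar_scalar_simps numeral_2_eq_2; simp add: field_simps)

lemma alt_star_catalan_XX:
  assumes "q \<noteq> 0" "q - inverse q \<noteq> 0"
  shows "qstar q alt_series (catalan_series q (-inverse q)) (X # X # w)
    = inverse q ^ 2 * qnat q 2 * Phi' q 0 w"
  using assms qnat_2[OF assms(2)]
  by (simp add: Phi'_def qstar_scalar_simps numeral_2_eq_2; simp add: field_simps)

lemma alt_star_catalan_diff:
  assumes "q \<noteq> 0" "q - inverse q \<noteq> 0"
  shows "qstar q alt_series (catalan_series q (-inverse q)) w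
      - qstar q (catalan_series q (-q)) alt_series w
    = (q - inverse q) * of_nat (length w div 2) * alt_series w"
proof (induction w rule: alternating.induct)
  case (2 w)
  then show ?case
    by (simp only: catalan_star_alt_XY alt_star_catalan_XY) (simp add: algebra_simps)
next
  case ("3_3" c w)
  show ?case
  proof (cases c)
    case X
    have "inverse q ^ 2 * qnat q 2 * (q ^ (2 * 0 + 4) * Phi q 0 w) = q ^ 2 * qnat q 2 * Phi q 0 w"
      using assms(1) by (simp add: field_simps eval_nat_numeral)
    with X show ?thesis
      by (simp only: catalan_star_alt_XX[OF assms] alt_star_catalan_XX[OF assms] Phi'_eq_Phi[OF assms])
        simp
  qed simp
qed (simp_all add: catalan_series_def split: letter.split)

fun xy_word :: "nat \<Rightarrow> word" where
  "xy_word 0 = []"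
| "xy_word (Suc n) = X # Y # xy_word n"

definition xy_pow :: "nat \<Rightarrow> word \<Rightarrow> 'a::field" where
  "xy_pow i = basis (xy_word i)"

definition y_xy_pow :: "nat \<Rightarrow> word \<Rightarrow> 'a::field" where
  "y_xy_pow i = basis (Y # xy_word i)"

lemma xy_pow_simps [simp]:
  "xy_pow i [] = (if i = 0 then 1 else 0)"
  "xy_pow 0 (c # u) = 0"
  "xy_pow (Suc i) (X # u) = y_xy_pow i u"
  "xy_pow i (Y # u) = 0"
  by (cases i; simp add: xy_pow_def y_xy_pow_def)+

lemma y_xy_pow_simps [simp]:
  "y_xy_pow i [] = 0" "y_xy_pow i (X # u) = 0" "y_xy_pow i (Y # u) = xy_pow i u"
  by (simp_all add: xy_pow_def y_xy_pow_def)

lemma xy_pow_0: "xy_pow 0 = basis []"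
  by (simp add: xy_pow_def)

lemma length_xy_word: "length (xy_word n) = 2 * n"
  by (induction n) simp_all

lemma barsum_xy_word: "barsum (xy_word i) = 0"
  by (induction i) simp_all

lemma twist_xy_pow [simp]: "(q::'a::field) powi wpair u c * xy_pow i u = xy_pow i u"
  by (simp add: xy_pow_def basis_def wpair_eq_barsum barsum_xy_word)

lemma twist_y_xy_pow_X [simp]:
  "(q::'a::field) powi wpair u X * y_xy_pow i u = inverse q ^ 2 * y_xy_pow i u"
  by (simp add: y_xy_pow_def basis_def wpair_eq_barsum barsum_xy_word power_int_minus power_inverse)

lemma twist_y_xy_pow_Y [simp]:
  "(q::'a::field) powi wpair u Y * y_xy_pow i u = q ^ 2 * y_xy_pow i u"
  by (simp add: y_xy_pow_def basis_def wpair_eq_barsum barsum_xy_word)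

lemma xy_pow_commute_step:
  assumes "\<And>a b. qstar q (xy_pow a) (xy_pow b) w = qstar q (xy_pow b) (xy_pow a) w"
    and "\<And>a b. qstar q (y_xy_pow a) (y_xy_pow b) w = qstar q (y_xy_pow b) (y_xy_pow a) w"
  shows "qstar q (xy_pow i) (xy_pow j) (c # d # w) = qstar q (xy_pow j) (xy_pow i) (c # d # w)"
proof (cases "i = 0 \<or> j = 0")
  case True
  then show ?thesis
    by (auto simp del: qstar.simps simp: xy_pow_0)
next
  case False
  then obtain a b where "i = Suc a" "j = Suc b"
    by (cases i; cases j) auto
  then show ?thesis
    using assms by (cases c; cases d) (simp_all add: qstar_scale_left add.commute)
qed

lemma y_xy_pow_commute_step:
  assumes "q \<noteq> 0"
    and "\<And>a b. qstar q (xy_pow a) (xy_pow b) w = qstar q (xy_pow b) (xy_pow a) w"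
    and "\<And>a b. qstar q (y_xy_pow a) (y_xy_pow b) w = qstar q (y_xy_pow b) (y_xy_pow a) w"
  shows "qstar q (y_xy_pow i) (y_xy_pow j) (c # d # w) = qstar q (y_xy_pow j) (y_xy_pow i) (c # d # w)"
proof -
  have "q ^ 2 * inverse q ^ 2 = 1"
    using assms(1) by (simp add: power_mult_distrib[symmetric])
  then show ?thesis
    using assms(2,3)
    by (cases c; cases d; cases i; cases j)
      (simp_all add: qstar_scale_left mult.assoc[symmetric] add.commute)
qed

lemma xy_pow_commute:
  assumes "q \<noteq> 0"
  shows "qstar q (xy_pow i) (xy_pow j) = qstar q (xy_pow j) (xy_pow i)"
proof -
  have "qstar q (xy_pow i) (xy_pow j) w = qstar q (xy_pow j) (xy_pow i) w
      \<and> qstar q (y_xy_pow i) (y_xy_pow j) w = qstar q (y_xy_pow j) (y_xy_pow i) w" for w i j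
  proof (induction w arbitrary: i j rule: induct_list012)
    case (3 c d w)
    then show ?case
      using xy_pow_commute_step y_xy_pow_commute_step[OF assms] by blast
  qed (simp_all add: mult.commute)
  then show ?thesis
    by auto
qed

definition homog :: "nat \<Rightarrow> (word \<Rightarrow> 'a::zero) \<Rightarrow> word \<Rightarrow> 'a" where
  "homog j F u = (if length u = j then F u else 0)"

lemma homog_Cons:
  "(\<lambda>u. homog j F (c # u)) = (case j of 0 \<Rightarrow> (\<lambda>u. 0) | Suc i \<Rightarrow> homog i (\<lambda>u. F (c # u)))"
  by (simp add: homog_def fun_eq_iff split: nat.split)

lemma twist_homog:
  "(\<lambda>u. (q::'a::field) powi wpair u c * homog j F u) = homog j (\<lambda>u. q powi wpair u c * F u)"
  by (simp add: homog_def fun_eq_iff)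

lemma qstar_homog_sum:
  "qstar q F G w = (\<Sum>j\<le>length w. qstar q (homog j F) (homog (length w - j) G) w)"
proof (induction w arbitrary: F G)
  case (Cons c w)
  let ?n = "length w"
  have first: "(\<Sum>j\<le>Suc ?n. qstar q (\<lambda>u. homog j F (c # u)) (homog (Suc ?n - j) G) w)
      = (\<Sum>j\<le>?n. qstar q (homog j (\<lambda>u. F (c # u))) (homog (?n - j) G) w)"
    by (subst sum.atMost_Suc_shift) (simp add: homog_Cons)
  have "(\<lambda>u. homog (Suc ?n - j) G (c # u)) = homog (?n - j) (\<lambda>u. G (c # u))" if "j \<le> ?n" for j
    using that by (simp add: homog_Cons Suc_diff_le)
  then have second:
    "(\<Sum>j\<le>Suc ?n. qstar q (\<lambda>u. q powi wpair u c * homog j F u) (\<lambda>u. homog (Suc ?n - j) G (c # u)) w)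
      = (\<Sum>j\<le>?n. qstar q (homog j (\<lambda>u. q powi wpair u c * F u)) (homog (?n - j) (\<lambda>u. G (c # u))) w)"
    by (subst sum.atMost_Suc) (simp add: twist_homog homog_Cons)
  show ?case
    by (simp only: qstar.simps Cons.IH[of "\<lambda>u. F (c # u)" G]
        Cons.IH[of "\<lambda>u. q powi wpair u c * F u" "\<lambda>u. G (c # u)"] first second sum.distrib length_Cons)
qed (simp add: homog_def)

lemma qstar_homog_eq_0:
  assumes "homog a F = F" "homog b G = G" "length w \<noteq> a + b"
  shows "qstar q F G w = 0"
proof -
  have "qstar q (homog j F) (homog (length w - j) G) w = 0" if "j \<le> length w" for j
  proof (cases "j = a")
    case True
    with assms(3) that have "length w - j \<noteq> b"
      by linarith
    then have "homog (length w - j) G = (\<lambda>u. 0)"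
      by (subst assms(2)[symmetric]) (simp add: homog_def fun_eq_iff)
    then show ?thesis by simp
  next
    case False
    then have "homog j F = (\<lambda>u. 0)"
      by (subst assms(1)[symmetric]) (simp add: homog_def fun_eq_iff)
    then show ?thesis by simp
  qed
  then show ?thesis
    by (simp add: qstar_homog_sum[of q F G w])
qed

lemma walks_Suc_snoc_Y: "walks q r (Suc h) u \<noteq> 0 \<Longrightarrow> \<exists>v. u = v @ [Y]"
proof (induction u arbitrary: h)
  case (Cons c u)
  show ?case
  proof (cases "u = []")
    case True
    with Cons.prems show ?thesis
      by (cases c; cases h) auto
  next
    case False
    with Cons.prems obtain k where "walks q r (Suc k) u \<noteq> 0"
      by (cases c; cases h) (auto simp: walks_0 basis_def split: if_splits)
    then show ?thesis
      using Cons.IH by (metis append_Cons)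
  qed
qed simp

lemma prefix_barsum_nonneg_Cons:
  assumes "0 \<le> a"
  shows "(\<forall>i\<le>length (c # v). 0 \<le> a + barsum (take i (c # v)))
    \<longleftrightarrow> (\<forall>i\<le>length v. 0 \<le> (a + lbar c) + barsum (take i v))"
proof -
  have "(\<forall>i\<le>Suc n. P i) \<longleftrightarrow> P 0 \<and> (\<forall>i\<le>n. P (Suc i))" for n and P :: "nat \<Rightarrow> bool"
    by (metis Suc_le_mono not0_implies_Suc zero_le)
  with assms show ?thesis
    by (simp add: add.assoc)
qed

lemma prod_prefix_barsum_Cons:
  "(\<Prod>i<length (c # v). f (a + barsum (take (Suc i) (c # v))))
    = f (a + lbar c) * (\<Prod>i<length v. f ((a + lbar c) + barsum (take (Suc i) v)))"
  by (simp only: length_Cons prod.lessThan_Suc_shift) (simp add: add.assoc)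

lemma walks_Suc_snoc:
  assumes "q - inverse q \<noteq> 0"
  shows "walks q r (Suc h) (v @ [Y]) =
    (if (\<forall>i\<le>length v. 0 \<le> int h + barsum (take i v)) \<and> int h + barsum v = 0
     then r ^ count_list v X * (\<Prod>i<length v. qint q (1 + int h + barsum (take (Suc i) v)))
     else 0)"
proof (induction v arbitrary: h)
  case Nil
  then show ?case
    by (cases h) simp_all
next
  case (Cons c v)
  note cond = prefix_barsum_nonneg_Cons[where a = "int h", OF of_nat_0_le_iff]
  note prod = prod_prefix_barsum_Cons[where f = "qint q" and a = "1 + int h"]
  show ?case
  proof (cases c)
    case X
    have "int h + lbar X = int (Suc h)" "qint q (1 + int h + lbar X) = qnat q (Suc (Suc h))"
      using qint_of_nat[of q "Suc (Suc h)"] by (simp_all add: algebra_simps)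
    then show ?thesis
      unfolding X
      by (simp only: cond[unfolded X] prod[unfolded X] append_Cons walks.simps Cons.IH)
        (auto simp: algebra_simps)
  next
    case Y
    show ?thesis
    proof (cases h)
      case 0
      then show ?thesis
        using Y cond by (cases v) auto
    next
      case (Suc k)
      have "int h + lbar Y = int k" "qint q (1 + int h + lbar Y) = qnat q h"
        using Suc qint_of_nat[of q h] by simp_all
      then show ?thesis
        unfolding Y
        by (simp only: cond[unfolded Y] prod[unfolded Y] append_Cons walks.simps)
          (auto simp: Suc Cons.IH algebra_simps)
    qed
  qed
qed

lemma catalan_iff:
  "catalan v \<longleftrightarrow> (\<forall>i\<le>length v. 0 \<le> barsum (take i v)) \<and> barsum v = 0"
proof -
  have "0 \<le> barsum (take i v)"
    if "barsum v = 0" "\<forall>i. 1 \<le> i \<and> i < length v \<longrightarrow> 0 \<le> barsum (take i v)" "i \<le> length v"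
    for i
    using that by (cases "i = 0 \<or> i = length v") auto
  then show ?thesis
    unfolding catalan_def by auto
qed

lemma barsum_append [simp]: "barsum (u @ v) = barsum u + barsum v"
  by (simp add: barsum_def)

lemma length_eq_count_X: "barsum v = 0 \<Longrightarrow> length v = 2 * count_list v X"
proof -
  have "barsum v = int (count_list v X) - int (count_list v Y)
      \<and> length v = count_list v X + count_list v Y"
  proof (induction v)
    case (Cons c v)
    then show ?case by (cases c) auto
  qed simp
  then show "barsum v = 0 \<Longrightarrow> length v = 2 * count_list v X"
    by simp
qed

lemma walks_one_snoc_Y:
  assumes "q - inverse q \<noteq> 0"
  shows "walks q r (Suc 0) (v @ [Y]) = (if catalan v
    then r ^ (length v div 2) * (\<Prod>i\<in>{0..length v}. qint q (1 + barsum (take i v))) else 0)"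
proof (cases "catalan v")
  case True
  have "qint q 1 = 1"
    using assms by (simp add: qint_def power_int_minus)
  then have "(\<Prod>i\<in>{0..length v}. qint q (1 + barsum (take i v)))
      = (\<Prod>i<length v. qint q (1 + barsum (take (Suc i) v)))"
    by (simp only: atLeast0AtMost lessThan_Suc_atMost[symmetric] prod.lessThan_Suc_shift) simp
  moreover have "length v div 2 = count_list v X"
    using True length_eq_count_X by (simp add: catalan_iff)
  ultimately show ?thesis
    using True walks_Suc_snoc[OF assms, of r 0 v] by (simp add: catalan_iff)
next
  case False
  then have "walks q r (Suc 0) (v @ [Y]) = 0"
    using walks_Suc_snoc[OF assms, of r 0 v] by (auto simp: catalan_iff)
  with False show ?thesis
    by simp
qed

lemma xCy_Cons_snoc: "xCy q n (X # v @ [Y]) = Cn q n v"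
  by (simp add: xCy_def)

lemma xCy_nonzero_shape: "xCy q n u \<noteq> 0 \<Longrightarrow> u = X # butlast (tl u) @ [Y] \<and> length u = 2 * n + 2"
proof -
  assume "xCy q n u \<noteq> 0"
  then have "2 \<le> length u" "hd u = X" "last u = Y" "length u = 2 * n + 2"
    by (auto simp: xCy_def Cn_def split: if_splits)
  moreover obtain a u' where u: "u = a # u'" "u' \<noteq> []"
    using \<open>2 \<le> length u\<close> by (cases u) (auto simp: Suc_le_eq)
  moreover have "u' = butlast u' @ [last u']"
    using u(2) by simp
  ultimately show ?thesis
    by simp
qed

lemma catalan_series_nonzero_shape:
  "catalan_series q r u \<noteq> 0 \<Longrightarrow> \<exists>v. u = X # v @ [Y] \<and> barsum v = 0"
proof -
  assume "catalan_series q r u \<noteq> 0"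
  then obtain u' where "u = X # u'" "walks q r (Suc 0) u' \<noteq> 0"
    by (auto simp: catalan_series_def split: list.splits letter.splits)
  with walks_Suc_snoc_Y[of q r 0 u'] barsum_walks[of q r "Suc 0" u'] show ?thesis
    by auto
qed

lemma catalan_series_eq_xCy:
  assumes "q - inverse q \<noteq> 0" "length u = 2 * n + 2"
  shows "catalan_series q r u = r ^ Suc n * xCy q n u"
proof (cases "\<exists>v. u = X # v @ [Y]")
  case True
  then obtain v where u: "u = X # v @ [Y]" and "length v = 2 * n"
    using assms(2) by auto
  then show ?thesis
    by (simp add: walks_one_snoc_Y[OF assms(1)] xCy_Cons_snoc Cn_def)
next
  case False
  then have "catalan_series q r u = 0" "xCy q n u = 0"
    using catalan_series_nonzero_shape xCy_nonzero_shape by blast+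
  then show ?thesis
    by simp
qed

lemma homog_catalan_series:
  assumes "q - inverse q \<noteq> 0"
  shows "homog j (catalan_series q r)
    = (\<lambda>u. (if even j \<and> 2 \<le> j then r ^ (j div 2) else 0) * xCy q (j div 2 - 1) u)"
proof
  fix u
  show "homog j (catalan_series q r) u
    = (if even j \<and> 2 \<le> j then r ^ (j div 2) else 0) * xCy q (j div 2 - 1) u"
  proof (cases "even j \<and> 2 \<le> j")
    case True
    then have "j = 2 * (j div 2 - 1) + 2" "Suc (j div 2 - 1) = j div 2"
      by auto
    then show ?thesis
      using True xCy_nonzero_shape[of q "j div 2 - 1" u]
      by (auto simp: homog_def catalan_series_eq_xCy[OF assms])
  next
    case False
    have "catalan_series q r u = 0" if "length u = j"
      using False that catalan_series_nonzero_shape[of q r u] length_eq_count_X by fastforce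
    then show ?thesis
      using False by (auto simp: homog_def)
  qed
qed

lemma alternating_iff: "alternating u \<longleftrightarrow> u = xy_word (length u div 2)"
proof
  show "alternating u \<Longrightarrow> u = xy_word (length u div 2)"
    by (induction u rule: alternating.induct) simp_all
  have "alternating (xy_word n)" for n
    by (induction n) simp_all
  then show "u = xy_word (length u div 2) \<Longrightarrow> alternating u"
    by metis
qed

lemma homog_alt_series:
  "homog k alt_series = (\<lambda>u. (if even k then 1 else 0) * xy_pow (k div 2) u)"
proof
  fix u :: word
  have "alternating (xy_word n)" for n
    using alternating_iff length_xy_word by simp
  then show "homog k alt_series u = (if even k then 1 else 0) * xy_pow (k div 2) u"
    using alternating_iff[of u] length_xy_word[of "k div 2"]
    by (auto simp: homog_def alt_series_def xy_pow_def basis_def) presburger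
qed

lemma homog_alt_catalan_sum:
  assumes "q \<noteq> 0" "q - inverse q \<noteq> 0"
  shows "(\<Sum>j\<le>2 * N. qstar q (homog j alt_series) (homog (2 * N - j) (catalan_series q (- inverse q))) w
      - qstar q (homog j (catalan_series q (- q))) (homog (2 * N - j) alt_series) w)
    = (q - inverse q) * of_nat N * xy_pow N w"
proof (cases "length w = 2 * N")
  case True
  then have "(\<Sum>j\<le>2 * N. qstar q (homog j alt_series) (homog (2 * N - j) (catalan_series q (- inverse q))) w
      - qstar q (homog j (catalan_series q (- q))) (homog (2 * N - j) alt_series) w)
    = qstar q alt_series (catalan_series q (- inverse q)) w - qstar q (catalan_series q (- q)) alt_series w"
    by (simp add: sum_subtractf qstar_homog_sum[of q alt_series] qstar_homog_sum[of q "catalan_series q (- q)"])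
  also have "\<dots> = (q - inverse q) * of_nat N * alt_series w"
    by (rule alt_star_catalan_diff[OF assms, of w, unfolded True, simplified])
  also have "alt_series w = (xy_pow N w :: 'a)"
    using True fun_cong[OF homog_alt_series[of "2 * N"], of w] by (simp add: homog_def)
  finally show ?thesis .
next
  case False
  then have "(xy_pow N w :: 'a) = 0"
    using length_xy_word[of N] by (auto simp: xy_pow_def basis_def)
  moreover have "qstar q (homog j F) (homog (2 * N - j) G) w = 0" if "j \<le> 2 * N" for j F G
    using False that by (intro qstar_homog_eq_0[where a = j and b = "2 * N - j"])
      (auto simp: homog_def fun_eq_iff)
  ultimately show ?thesis
    by simp
qed

lemma xCy_recursion:
  assumes "q \<noteq> 0" "q - inverse q \<noteq> 0"
  shows "((- inverse q) ^ Suc n - (- q) ^ Suc n) * xCy q n w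
    = (q - inverse q) * of_nat (Suc n) * xy_pow (Suc n) w
      - (\<Sum>j\<in>{1..<2 * Suc n}.
          qstar q (homog j alt_series) (homog (2 * Suc n - j) (catalan_series q (- inverse q))) w
          - qstar q (homog j (catalan_series q (- q))) (homog (2 * Suc n - j) alt_series) w)"
proof -
  define U where "U j = qstar q (homog j alt_series) (homog (2 * Suc n - j) (catalan_series q (- inverse q))) w
      - qstar q (homog j (catalan_series q (- q))) (homog (2 * Suc n - j) alt_series) w" for j
  define S where "S = (\<Sum>j\<in>{1..<2 * Suc n}. U j)"
  define T where "T = (\<Sum>j\<le>2 * Suc n. U j)"
  have "{..2 * Suc n} = insert 0 (insert (2 * Suc n) {1..<2 * Suc n})"
    by auto
  then have "T = U 0 + U (2 * Suc n) + S"
    by (simp add: S_def T_def add.assoc)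
  moreover have "T = (q - inverse q) * of_nat (Suc n) * xy_pow (Suc n) w"
    unfolding T_def U_def by (rule homog_alt_catalan_sum[OF assms])
  moreover have "U 0 = (- inverse q) ^ Suc n * xCy q n w" "U (2 * Suc n) = - ((- q) ^ Suc n * xCy q n w)"
    by (simp_all add: U_def homog_alt_series homog_catalan_series[OF assms(2)] xy_pow_0 qstar_scalar_simps)
  ultimately show ?thesis
    unfolding U_def[symmetric] S_def[symmetric] by (simp add: algebra_simps)
qed

inductive xy_algebra :: "'a::field \<Rightarrow> (word \<Rightarrow> 'a) \<Rightarrow> bool" for q where
  generator: "xy_algebra q (xy_pow k)"
| scale: "xy_algebra q F \<Longrightarrow> xy_algebra q (\<lambda>u. a * F u)"
| add: "xy_algebra q F \<Longrightarrow> xy_algebra q G \<Longrightarrow> xy_algebra q (\<lambda>u. F u + G u)"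
| qstar: "xy_algebra q F \<Longrightarrow> xy_algebra q G \<Longrightarrow> xy_algebra q (qstar q F G)"

lemma xy_algebra_zero: "xy_algebra q (\<lambda>u. 0)"
  using xy_algebra.scale[OF xy_algebra.generator, of q 0 0] by simp

lemma xy_algebra_scale_if:
  "(P \<Longrightarrow> xy_algebra q F) \<Longrightarrow> xy_algebra q (\<lambda>u. (if P then a else 0) * F u)"
  by (cases P) (simp_all add: xy_algebra.scale xy_algebra_zero)

lemma xy_algebra_diff:
  assumes "xy_algebra q F" "xy_algebra q G"
  shows "xy_algebra q (\<lambda>u. F u - G u)"
  using xy_algebra.add[OF assms(1) xy_algebra.scale[OF assms(2), of "-1"]] by simp

lemma xy_algebra_sum:
  "finite S \<Longrightarrow> (\<And>i. i \<in> S \<Longrightarrow> xy_algebra q (F i)) \<Longrightarrow> xy_algebra q (\<lambda>u. \<Sum>i\<in>S. F i u)"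
  by (induction S rule: finite_induct) (simp_all add: xy_algebra_zero xy_algebra.add)

lemma qstar_commute_qstar:
  assumes "q \<noteq> 0" "qstar q F H = qstar q H F" "qstar q G H = qstar q H G"
  shows "qstar q (qstar q F G) H = qstar q H (qstar q F G)"
proof -
  have assoc: "qstar q (qstar q A B) C = qstar q A (qstar q B C)" for A B C
    using qstar_assoc[OF assms(1)] by (rule ext)
  have "qstar q (qstar q F G) H = qstar q F (qstar q H G)"
    by (simp only: assoc assms(3))
  also have "\<dots> = qstar q H (qstar q F G)"
    by (simp only: assoc[symmetric] assms(2))
  finally show ?thesis .
qed

lemma xy_algebra_commute_if_generators_commute:
  assumes "q \<noteq> 0" "xy_algebra q F" "\<And>k. qstar q (xy_pow k) H = qstar q H (xy_pow k)"
  shows "qstar q F H = qstar q H F"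
  using assms(2)
proof induction
  case (scale F a)
  then show ?case
    by (simp add: fun_eq_iff qstar_scale_left qstar_scale_right)
next
  case (add F G)
  then show ?case
    by (simp add: fun_eq_iff qstar_add_left qstar_add_right)
next
  case (qstar F G)
  then show ?case
    using qstar_commute_qstar[OF assms(1)] by blast
qed (rule assms(3))

lemma xy_algebra_commute:
  assumes "q \<noteq> 0" "xy_algebra q F" "xy_algebra q G"
  shows "qstar q F G = qstar q G F"
proof (rule xy_algebra_commute_if_generators_commute[OF assms(1,2)])
  fix k
  show "qstar q (xy_pow k) G = qstar q G (xy_pow k)"
    using xy_algebra_commute_if_generators_commute[OF assms(1,3)] xy_pow_commute[OF assms(1)] by metis
qed

lemma qstar_scale_both: "qstar q (\<lambda>u. a * F u) (\<lambda>u. b * G u) = (\<lambda>w. a * (b * qstar q F G w))"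
  by (simp add: fun_eq_iff qstar_scale_left qstar_scale_right)

lemma xy_algebra_homog_qstar:
  assumes "q - inverse q \<noteq> 0" "0 < j" "j < 2 * Suc n"
    and "\<And>m. m < n \<Longrightarrow> xy_algebra q (xCy q m)"
  shows "xy_algebra q (qstar q (homog j alt_series) (homog (2 * Suc n - j) (catalan_series q r)))"
    and "xy_algebra q (qstar q (homog j (catalan_series q r)) (homog (2 * Suc n - j) alt_series))"
proof -
  have "(2 * Suc n - j) div 2 - 1 < n" if "even (2 * Suc n - j)"
    using assms(2,3) that by (auto elim!: evenE)
  then show "xy_algebra q (qstar q (homog j alt_series) (homog (2 * Suc n - j) (catalan_series q r)))"
    unfolding homog_alt_series homog_catalan_series[OF assms(1)] qstar_scale_both
    by (intro xy_algebra.scale xy_algebra_scale_if xy_algebra.qstar xy_algebra.generator assms(4)) auto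
  have "j div 2 - 1 < n" if "even j" "2 \<le> j"
    using assms(3) that by (auto elim!: evenE)
  then show "xy_algebra q (qstar q (homog j (catalan_series q r)) (homog (2 * Suc n - j) alt_series))"
    unfolding homog_alt_series homog_catalan_series[OF assms(1)] qstar_scale_both
    by (intro xy_algebra.scale xy_algebra_scale_if xy_algebra.qstar xy_algebra.generator assms(4)) auto
qed

lemma q_minus_inverse_neq_0:
  assumes "(q::'a::field) \<noteq> 0" "q ^ 2 \<noteq> 1"
  shows "q - inverse q \<noteq> 0"
  using assms by (auto simp: power2_eq_square field_simps)

lemma minus_inverse_power_neq:
  assumes "(q::'a::field) \<noteq> 0" "q ^ (2 * N) \<noteq> 1"
  shows "(- inverse q) ^ N \<noteq> (- q) ^ N"
proof
  assume "(- inverse q) ^ N = (- q) ^ N"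
  then have "inverse q ^ N * q ^ N = q ^ N * q ^ N"
    by (simp add: power_minus[of "inverse q"] power_minus[of q])
  with assms show False
    by (simp add: inverse_power_mult_power mult_2 power_add)
qed

lemma xCy_in_xy_algebra:
  assumes "q \<noteq> 0" "\<And>N. 0 < N \<Longrightarrow> q ^ (2 * N) \<noteq> 1"
  shows "xy_algebra q (xCy q n)"
proof -
  have q_ne_inverse: "q - inverse q \<noteq> 0"
    using q_minus_inverse_neq_0[OF assms(1)] assms(2)[of 1] by simp
  show ?thesis
  proof (induction n rule: less_induct)
    case (less n)
    define c where "c = (- inverse q) ^ Suc n - (- q) ^ Suc n"
    have "xy_algebra q (\<lambda>w. c * xCy q n w)"
      unfolding c_def xCy_recursion[OF assms(1) q_ne_inverse]
      by (intro xy_algebra_diff xy_algebra.scale xy_algebra.generator xy_algebra_sum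
          xy_algebra_homog_qstar[OF q_ne_inverse] less) auto
    then have "xy_algebra q (\<lambda>w. inverse c * (c * xCy q n w))"
      by (rule xy_algebra.scale)
    moreover have "c \<noteq> 0"
      unfolding c_def right_minus_eq by (rule minus_inverse_power_neq[OF assms(1,2)]) simp
    then have "(\<lambda>w. inverse c * (c * xCy q n w)) = xCy q n"
      by (simp add: fun_eq_iff mult.assoc[symmetric])
    ultimately show ?case
      by simp
  qed
qed

lemma finite_xCy_support: "finite {u. xCy q n u \<noteq> 0}"
proof -
  have "finite (UNIV :: letter set)"
    by (metis finite.emptyI finite.insertI letter.exhaust insertCI UNIV_eq_I)
  then have "finite {u :: word. length u = 2 * n + 2}"
    using finite_lists_length_eq[of UNIV "2 * n + 2"] by simp
  then show ?thesis
    by (rule finite_subset[rotated]) (auto dest: xCy_nonzero_shape)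
qed

theorem corollary8p4:
  fixes q :: "'a::field_char_0" and n m :: nat
  assumes "q \<noteq> 0" and "\<forall>k::nat. k > 0 \<longrightarrow> q ^ k \<noteq> 1"
  shows "qshuffle q (xCy q n) (xCy q m) = qshuffle q (xCy q m) (xCy q n)"
proof -
  have "xy_algebra q (xCy q k)" for k
    using assms by (intro xCy_in_xy_algebra) auto
  then have "qstar q (xCy q n) (xCy q m) = qstar q (xCy q m) (xCy q n)"
    using xy_algebra_commute[OF assms(1)] by blast
  then show ?thesis
    by (simp add: qshuffle_eq_qstar finite_xCy_support)
qed

end
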